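(* Let $n,m>3$ be integers and let $\psi$ be an automorphism of $\mathcal{CSR}(m,n)$, and suppose $\psi_1,\dots,\psi_m$ are permutations of $\mathbb{Z}_n$ and $\sigma$ is a permutation of $[m]$ such that $\psi\big(\sum_i x_ie_i\big)=\sum_i\psi_i(x_i)e_{\sigma(i)}$ for every vertex. Then there are $c,d\in\mathbb{Z}_n$ with $c$ coprime to $n$ such that $\psi_1(x)=cx+d$ for all $x\in\mathbb{Z}_n$.
   Context: For positive integers $m,n$, the cyclic simplicial rook graph $\mathcal{CSR}(m,n)$ is the graph whose vertices are the vectors $(a_1,\dots,a_m)\in\mathbb{Z}_n^m$ with $a_1+\cdots+a_m\equiv 0 \pmod n$, two vertices being adjacent if and only if their vectors differ in exactly two coordinates. $[m]=\{1,\dots,m\}$ and $e_i\in\mathbb{Z}_n^m$ is the vector with $1$ in coordinate $i$ and $0$ elsewhere. *)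

theory Defs
  imports "HOL-Combinatorics.Permutations" "HOL-Computational_Algebra.Primes"
begin

text \<open>Vertices of CSR(m,n): vectors indexed by {1..m} with entries in Z_n = {0..<n},
  represented as functions nat => nat that vanish outside {1..m}, with coordinate sum
  divisible by n.\<close>
definition csr_vertices :: "nat \<Rightarrow> nat \<Rightarrow> (nat \<Rightarrow> nat) set" where
  "csr_vertices m n = {x. (\<forall>i\<in>{1..m}. x i < n) \<and> (\<forall>i. i \<notin> {1..m} \<longrightarrow> x i = 0)
                         \<and> (\<Sum>i=1..m. x i) mod n = 0}"

definition csr_adj :: "nat \<Rightarrow> (nat \<Rightarrow> nat) \<Rightarrow> (nat \<Rightarrow> nat) \<Rightarrow> bool" where
  "csr_adj m x y \<longleftrightarrow> card {i\<in>{1..m}. x i \<noteq> y i} = 2"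

definition csr_automorphism :: "nat \<Rightarrow> nat \<Rightarrow> ((nat \<Rightarrow> nat) \<Rightarrow> (nat \<Rightarrow> nat)) \<Rightarrow> bool" where
  "csr_automorphism m n \<psi> \<longleftrightarrow> bij_betw \<psi> (csr_vertices m n) (csr_vertices m n) \<and>
     (\<forall>x\<in>csr_vertices m n. \<forall>y\<in>csr_vertices m n. csr_adj m x y \<longleftrightarrow> csr_adj m (\<psi> x) (\<psi> y))"

end

theory Submission
  imports Defs "HOL-Number_Theory.Cong"
begin

text \<open>Evaluating
  the coordinate description of \<open>\<psi>\<close> on the vertices \<open>a e\<^sub>1 + b e\<^sub>2 + c e\<^sub>3\<close> with
  \<open>a + b + c = 0\<close> gives \<open>\<psi>\<^sub>1(a) + \<psi>\<^sub>2(b) + \<psi>\<^sub>3(c) + K = 0\<close> in \<open>\<int>\<^sub>n\<close> for a constant \<open>K\<close>.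
  Comparing four such identities eliminates \<open>\<psi>\<^sub>2\<close> and \<open>\<psi>\<^sub>3\<close> and leaves Cauchy's equation
  \<open>\<psi>\<^sub>1(a + b) + \<psi>\<^sub>1(0) = \<psi>\<^sub>1(a) + \<psi>\<^sub>1(b)\<close>, whose solutions on the cyclic group \<open>\<int>\<^sub>n\<close> are
  affine. Finally an affine map \<open>x \<mapsto> c x + d\<close> can only be onto \<open>\<int>\<^sub>n\<close> if \<open>c\<close> is a unit.\<close>

lemma sum_atLeastAtMost_split_123:
  fixes f :: "nat \<Rightarrow> 'a::comm_monoid_add"
  assumes "3 \<le> m"
  shows "(\<Sum>i=1..m. f i) = f 1 + f 2 + f 3 + (\<Sum>i=4..m. f i)"
proof -
  have "{1..m} = {1,2,3} \<union> {4..m}" using assms by auto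
  then show ?thesis by (simp add: sum.union_disjoint add.assoc)
qed

lemma csr_vertices_fun_upd_123:
  assumes "3 \<le> m" "a < n" "b < n" "c < n" "n dvd a + b + c"
  shows "(\<lambda>_. 0)(1 := a, 2 := b, 3 := c) \<in> csr_vertices m n"
  using assms sum_atLeastAtMost_split_123[OF \<open>3 \<le> m\<close>, of "(\<lambda>_. 0)(1 := a, 2 := b, 3 := c)"]
  unfolding csr_vertices_def by auto

lemma csr_coordinate_sum_dvd:
  assumes maps: "\<psi> ` csr_vertices m n \<subseteq> csr_vertices m n"
    and \<sigma>: "\<sigma> permutes {1..m}"
    and coord: "\<forall>x\<in>csr_vertices m n. \<forall>i\<in>{1..m}. \<psi> x (\<sigma> i) = \<psi>s i (x i)"
    and x: "x \<in> csr_vertices m n"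
  shows "n dvd (\<Sum>i=1..m. \<psi>s i (x i))"
proof -
  have "n dvd (\<Sum>i=1..m. \<psi> x i)"
    using maps x unfolding csr_vertices_def by (auto simp: mod_eq_0_iff_dvd)
  also have "(\<Sum>i=1..m. \<psi> x i) = (\<Sum>i=1..m. \<psi> x (\<sigma> i))"
    using sum.permute[OF \<sigma>] by simp
  also have "\<dots> = (\<Sum>i=1..m. \<psi>s i (x i))"
    using coord x by simp
  finally show ?thesis .
qed

lemma csr_coordinate_sum_123_dvd:
  assumes "\<psi> ` csr_vertices m n \<subseteq> csr_vertices m n" "\<sigma> permutes {1..m}"
    and "\<forall>x\<in>csr_vertices m n. \<forall>i\<in>{1..m}. \<psi> x (\<sigma> i) = \<psi>s i (x i)"
    and "3 \<le> m" "a < n" "b < n" "c < n" "n dvd a + b + c"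
  shows "n dvd \<psi>s 1 a + \<psi>s 2 b + \<psi>s 3 c + (\<Sum>i=4..m. \<psi>s i 0)"
proof -
  let ?x = "(\<lambda>_. 0)(1 := a, 2 := b, 3 := c)"
  have "n dvd (\<Sum>i=1..m. \<psi>s i (?x i))"
    using assms by (intro csr_coordinate_sum_dvd csr_vertices_fun_upd_123)
  also have "(\<Sum>i=1..m. \<psi>s i (?x i)) = \<psi>s 1 a + \<psi>s 2 b + \<psi>s 3 c + (\<Sum>i=4..m. \<psi>s i 0)"
    using sum_atLeastAtMost_split_123[OF \<open>3 \<le> m\<close>, of "\<lambda>i. \<psi>s i (?x i)"] by simp
  finally show ?thesis .
qed

lemma cong_additive_of_cong_zero_sum3:
  fixes f g h :: "nat \<Rightarrow> int"
  assumes zero_sum: "\<And>a b c. a < n \<Longrightarrow> b < n \<Longrightarrow> c < n \<Longrightarrow> n dvd a + b + c \<Longrightarrow>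
      [f a + g b + h c = 0] (mod int n)"
    and "a < n" "b < n"
  shows "[f ((a + b) mod n) + f 0 = f a + f b] (mod int n)"
proof -
  define neg where "neg s = (n - s) mod n" for s
  have n: "n > 0" using \<open>a < n\<close> by simp
  have neg_less: "neg s < n" for s
    using n by (simp add: neg_def)
  have dvd_neg: "n dvd s + neg s" if "s < n" for s
    using that by (cases "s = 0") (auto simp: neg_def)
  have exchange: "[f a' + g b' = f a'' + g b''] (mod int n)"
    if "a' < n" "b' < n" "a'' < n" "b'' < n" "n dvd a' + b' + neg s" "n dvd a'' + b'' + neg s"
    for a' b' a'' b'' s
  proof -
    have "[f a' + g b' + h (neg s) = f a'' + g b'' + h (neg s)] (mod int n)"
      using cong_trans[OF zero_sum[of a' b' "neg s"] cong_sym[OF zero_sum[of a'' b'' "neg s"]]]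
        that neg_less by blast
    then show ?thesis by (simp add: cong_add_rcancel)
  qed
  let ?s = "(a + b) mod n"
  have "n dvd a + b + neg ?s"
    using dvd_neg[of ?s] n by (simp add: mod_add_left_eq flip: mod_eq_0_iff_dvd)
  then have "[f ?s + g 0 = f a + g b] (mod int n)"
    using exchange[of ?s 0 a b ?s] dvd_neg[of ?s] assms n by simp
  moreover have "[f 0 + g b = f b + g 0] (mod int n)"
    using exchange[of 0 b b 0 b] dvd_neg[of b] assms n by simp
  ultimately have "[(f ?s + g 0) + (f 0 + g b) = (f a + g b) + (f b + g 0)] (mod int n)"
    by (rule cong_add)
  then have "[(f ?s + f 0) + (g 0 + g b) = (f a + f b) + (g 0 + g b)] (mod int n)"
    by (simp only: ac_simps)
  then show ?thesis by (simp add: cong_add_rcancel)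
qed

lemma cong_affine_of_cong_additive:
  fixes f :: "nat \<Rightarrow> int" and k :: int
  assumes step: "\<And>x. Suc x < n \<Longrightarrow> [f (Suc x) + f 0 = f x + f 1] (mod k)"
    and "x < n"
  shows "[f x = f 0 + int x * (f 1 - f 0)] (mod k)"
  using \<open>x < n\<close>
proof (induction x)
  case 0
  then show ?case by simp
next
  case (Suc x)
  have "[f (Suc x) + f 0 = f x + f 1] (mod k)"
    using step Suc.prems by blast
  also have "[f x + f 1 = f 0 + int x * (f 1 - f 0) + f 1] (mod k)"
    using Suc by (simp add: cong_add_rcancel)
  also have "f 0 + int x * (f 1 - f 0) + f 1 = (f 0 + int (Suc x) * (f 1 - f 0)) + f 0"
    by (simp add: algebra_simps)
  finally show ?case
    by (simp only: cong_add_rcancel)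
qed

lemma cong_affine_of_cong_zero_sum3:
  fixes f g h :: "nat \<Rightarrow> int"
  assumes "\<And>a b c. a < n \<Longrightarrow> b < n \<Longrightarrow> c < n \<Longrightarrow> n dvd a + b + c \<Longrightarrow>
      [f a + g b + h c = 0] (mod int n)"
    and "x < n"
  shows "[f x = f 0 + int x * (f 1 - f 0)] (mod int n)"
proof (rule cong_affine_of_cong_additive[OF _ \<open>x < n\<close>])
  fix y assume "Suc y < n"
  then show "[f (Suc y) + f 0 = f y + f 1] (mod int n)"
    using cong_additive_of_cong_zero_sum3[OF assms(1), where a = y and b = 1] by simp
qed

lemma eq_affine_mod_of_cong:
  fixes x y d n :: nat and k :: int
  assumes "y < n" "[int y = int d + int x * k] (mod int n)"
  shows "y = (nat (k mod int n) * x + d) mod n"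
proof -
  have "int y = (int d + int x * k) mod int n"
    using assms by (simp add: cong_def)
  also have "\<dots> = (int d + int x * (k mod int n)) mod int n"
    by (metis mod_add_right_eq mod_mult_right_eq)
  also have "\<dots> = int ((nat (k mod int n) * x + d) mod n)"
    using \<open>y < n\<close> by (simp add: of_nat_mod algebra_simps)
  finally show ?thesis by simp
qed

lemma coprime_if_affine_mod_onto:
  fixes c d n :: nat
  assumes "n > 0" "(\<lambda>x. (c * x + d) mod n) ` A = {0..<n}"
  shows "coprime c n"
proof -
  have "(d + 1) mod n \<in> (\<lambda>x. (c * x + d) mod n) ` A"
    using assms by simp
  then obtain x where "[c * x + d = 1 + d] (mod n)"
    by (auto simp: cong_def add.commute)
  then have "[c * x = Suc 0] (mod n)"
    using cong_add_rcancel_nat[of "c * x" d 1] by simp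
  then show ?thesis
    by (auto simp: coprime_iff_invertible_nat)
qed

lemma affine_mod_of_bij_betw_cong_affine:
  fixes \<phi> :: "nat \<Rightarrow> nat" and k :: int
  assumes "n > 0" and bij: "bij_betw \<phi> {0..<n} {0..<n}"
    and affine: "\<And>x. x < n \<Longrightarrow> [int (\<phi> x) = int (\<phi> 0) + int x * k] (mod int n)"
  shows "\<exists>c d. c < n \<and> d < n \<and> coprime c n \<and> (\<forall>x<n. \<phi> x = (c * x + d) mod n)"
proof -
  define c d where "c = nat (k mod int n)" and "d = \<phi> 0"
  have affine_nat: "\<phi> x = (c * x + d) mod n" if "x < n" for x
  proof -
    have "\<phi> x < n" using bij_betwE[OF bij] that by simp
    then show ?thesis unfolding c_def d_def by (rule eq_affine_mod_of_cong[OF _ affine[OF that]])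
  qed
  have "(\<lambda>x. (c * x + d) mod n) ` {0..<n} = \<phi> ` {0..<n}"
    using affine_nat by (intro image_cong) simp_all
  also have "\<dots> = {0..<n}"
    using bij by (rule bij_betw_imp_surj_on)
  finally have "coprime c n"
    by (rule coprime_if_affine_mod_onto[OF \<open>n > 0\<close>])
  moreover have "c < n" "d < n"
    using \<open>n > 0\<close> bij_betwE[OF bij] by (simp_all add: c_def d_def nat_less_iff)
  ultimately show ?thesis using affine_nat by blast
qed

theorem lemma8:
  fixes m n :: nat and \<psi> :: "(nat \<Rightarrow> nat) \<Rightarrow> (nat \<Rightarrow> nat)"
    and \<psi>s :: "nat \<Rightarrow> nat \<Rightarrow> nat" and \<sigma> :: "nat \<Rightarrow> nat"
  assumes "n > 3" and "m > 3"
    and "csr_automorphism m n \<psi>"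
    and "\<forall>i\<in>{1..m}. bij_betw (\<psi>s i) {0..<n} {0..<n}"
    and "\<sigma> permutes {1..m}"
    and "\<forall>x\<in>csr_vertices m n. \<forall>i\<in>{1..m}. \<psi> x (\<sigma> i) = \<psi>s i (x i)"
  shows "\<exists>c d. c < n \<and> d < n \<and> coprime c n \<and> (\<forall>x<n. \<psi>s 1 x = (c * x + d) mod n)"
proof -
  have m: "3 \<le> m" and n: "n > 0" using assms(1,2) by simp_all
  have maps: "\<psi> ` csr_vertices m n \<subseteq> csr_vertices m n"
    using assms(3) by (simp add: csr_automorphism_def bij_betw_def)
  define f g h where "f a = int (\<psi>s 1 a)" and "g b = int (\<psi>s 2 b)"
    and "h c = int (\<psi>s 3 c) + (\<Sum>i=4..m. int (\<psi>s i 0))" for a b c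
  have zero_sum: "[f a + g b + h c = 0] (mod int n)"
    if "a < n" "b < n" "c < n" "n dvd a + b + c" for a b c
  proof -
    have "int n dvd int (\<psi>s 1 a + \<psi>s 2 b + \<psi>s 3 c + (\<Sum>i=4..m. \<psi>s i 0))"
      using csr_coordinate_sum_123_dvd[OF maps assms(5,6) m that] by (simp only: of_nat_dvd_iff)
    then show ?thesis by (simp add: f_def g_def h_def cong_0_iff add.assoc)
  qed
  show ?thesis
  proof (rule affine_mod_of_bij_betw_cong_affine[OF n])
    show "bij_betw (\<psi>s 1) {0..<n} {0..<n}" using assms(4) m by simp
    show "[int (\<psi>s 1 x) = int (\<psi>s 1 0) + int x * (f 1 - f 0)] (mod int n)" if "x < n" for x
      using cong_affine_of_cong_zero_sum3[OF zero_sum that] by (simp add: f_def)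
  qed
qed

end
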